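(* For each $n\ge1$ there exist $N\ge1$, rational numbers $a_1,\dots,a_N\in\mathbb{Q}$ and integer valued positive definite quadratic forms $Q_1,\dots,Q_N$ on $\mathbb{Z}^n$ such that \[ \Theta_n(q)=\sum_{i=1}^N a_i\,\Theta_{Q_i}(q), \] where $\Theta_n(q)=\sum_{(k_1,\dots,k_n)\in\mathbb{Z}^n}q^{\sum_{1\le i\le j\le n}k_ik_j}e^{\frac{2\pi\sqrt{-1}}{n+2}(k_1+2k_2+\cdots+nk_n)}$ and, for a quadratic form $Q$, $\Theta_Q(q)=\sum_{(k_1,\dots,k_n)\in\mathbb{Z}^n}q^{Q(k_1,\dots,k_n)}$.
   Context: An integer valued positive definite quadratic form on $\mathbb{Z}^n$ is a quadratic form $Q$ with $Q(\mathbb{Z}^n)\subset\mathbb{Z}$ whose real extension is positive definite. *)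

theory Defs
  imports Complex_Main "HOL-Computational_Algebra.Formal_Power_Series"
begin

text \<open>Lattice points of Z^n, represented as integer sequences supported on indices 0..n-1
  (index i corresponds to the coordinate k_(i+1) of the paper).\<close>
definition lattice :: "nat \<Rightarrow> (nat \<Rightarrow> int) set" where
  "lattice n = {k. \<forall>i\<ge>n. k i = 0}"

definition qf :: "nat \<Rightarrow> (nat \<Rightarrow> nat \<Rightarrow> real) \<Rightarrow> (nat \<Rightarrow> real) \<Rightarrow> real" where
  "qf n A x = (\<Sum>i<n. \<Sum>j<n. A i j * x i * x j)"

definition int_posdef_qf :: "nat \<Rightarrow> (nat \<Rightarrow> nat \<Rightarrow> real) \<Rightarrow> bool" where
  "int_posdef_qf n A \<longleftrightarrow>
     (\<forall>k\<in>lattice n. qf n A (\<lambda>i. real_of_int (k i)) \<in> \<int>) \<and>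
     (\<forall>x::nat \<Rightarrow> real. (\<forall>i\<ge>n. x i = 0) \<and> (\<exists>i<n. x i \<noteq> 0) \<longrightarrow> qf n A x > 0)"

definition theta_Q :: "nat \<Rightarrow> (nat \<Rightarrow> nat \<Rightarrow> real) \<Rightarrow> complex fps" where
  "theta_Q n A = Abs_fps (\<lambda>m. of_nat (card {k\<in>lattice n. qf n A (\<lambda>i. real_of_int (k i)) = real m}))"

definition theta_exp :: "nat \<Rightarrow> (nat \<Rightarrow> int) \<Rightarrow> int" where
  "theta_exp n k = (\<Sum>j<n. \<Sum>i\<le>j. k i * k j)"

definition theta_n :: "nat \<Rightarrow> complex fps" where
  "theta_n n = Abs_fps (\<lambda>m. \<Sum>k\<in>{k\<in>lattice n. theta_exp n k = int m}.
      exp (2 * pi * \<i> / of_nat (n + 2) * of_int (\<Sum>i<n. int (i + 1) * k i)))"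

end

theory Submission
  imports Defs "HOL-Number_Theory.Cong" "HOL-Library.Real_Mod"
begin

text \<open>Let \<open>\<zeta> = exp (2 \<pi> i / (n + 2))\<close>, \<open>w(k) = k\<^sub>1 + 2 k\<^sub>2 + \<dots> + n k\<^sub>n\<close> and
  \<open>\<Psi>\<^sub>j = \<Sum>\<^sub>k q\<^bsup>\<theta>(k)\<^esup> \<zeta>\<^bsup>j w(k)\<^esup>\<close>, so that \<open>\<Theta>\<^sub>n = \<Psi>\<^sub>1\<close>.

  If \<open>e d = n + 2\<close>, orthogonality of the \<open>d\<close>-th roots of unity makes \<open>\<Psi>\<^sub>0 + \<Psi>\<^sub>e + \<dots> + \<Psi>\<^bsub>(d-1)e\<^esub>\<close>
  equal to \<open>d\<close> times the theta series of \<open>\<theta>\<close> on the sublattice \<open>d | w(k)\<close>, which is the theta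
  series of a positive definite integral form. In the coordinates of the root lattice \<open>A\<^bsub>n+1\<^esub>\<close>
  one has \<open>\<theta> = \<Sum> y\<^sub>s\<^sup>2 / 2\<close> and \<open>w = \<Sum> s y\<^sub>s\<close>, so permuting the coordinates by
  \<open>s \<mapsto> a s mod (n + 2)\<close> shows \<open>\<Psi>\<^sub>a = \<Psi>\<^sub>1\<close> for \<open>a\<close> coprime to \<open>n + 2\<close>. Moebius inversion over
  the divisors of \<open>n + 2\<close> then writes \<open>\<Sum>\<^bsub>gcd(j, n+2) = 1\<^esub> \<Psi>\<^sub>j = \<phi>(n + 2) \<Theta>\<^sub>n\<close> as a rational
  combination of such theta series.\<close>

definition weight :: "nat \<Rightarrow> (nat \<Rightarrow> int) \<Rightarrow> int" where
  "weight n k = (\<Sum>i<n. int (i + 1) * k i)"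

definition level_set :: "nat \<Rightarrow> nat \<Rightarrow> (nat \<Rightarrow> int) set" where
  "level_set n c = {k \<in> lattice n. theta_exp n k = int c}"

lemma theta_exp_Suc: "theta_exp (Suc n) k = theta_exp n k + k n * (\<Sum>i<n. k i) + k n ^ 2"
  unfolding theta_exp_def
  by (simp add: sum_distrib_left mult.commute power2_eq_square lessThan_Suc_atMost[symmetric])

lemma double_theta_exp: "2 * theta_exp n k = (\<Sum>i<n. k i ^ 2) + (\<Sum>i<n. k i) ^ 2"
  by (induction n) (simp_all add: theta_exp_def[of 0] theta_exp_Suc algebra_simps power2_eq_square)

lemma abs_le_power2_int: "\<bar>x::int\<bar> \<le> x ^ 2"
proof (cases "x = 0")
  case False
  then have "\<bar>x\<bar> * 1 \<le> \<bar>x\<bar> * \<bar>x\<bar>"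
    by (intro mult_left_mono) auto
  then show ?thesis
    by (simp add: power2_eq_square)
qed simp

lemma finite_lattice_box: "finite {k \<in> lattice n. \<forall>i. \<bar>k i\<bar> \<le> B}"
proof (rule finite_subset)
  show "{k \<in> lattice n. \<forall>i. \<bar>k i\<bar> \<le> B} \<subseteq>
      {k. \<forall>i. (i \<in> {..<n} \<longrightarrow> k i \<in> {-B..B}) \<and> (i \<notin> {..<n} \<longrightarrow> k i = 0)}"
    by (auto simp: lattice_def abs_le_iff minus_le_iff)
qed (rule finite_set_of_finite_funs; simp)

lemma finite_level_set: "finite (level_set n c)"
proof (rule finite_subset[OF _ finite_lattice_box])
  show "level_set n c \<subseteq> {k \<in> lattice n. \<forall>i. \<bar>k i\<bar> \<le> 2 * int c}"
  proof safe
    fix k i assume k: "k \<in> level_set n c"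
    then show "k \<in> lattice n" by (simp add: level_set_def)
    show "\<bar>k i\<bar> \<le> 2 * int c"
    proof (cases "i < n")
      case True
      have "\<bar>k i\<bar> \<le> k i ^ 2"
        by (rule abs_le_power2_int)
      also have "\<dots> \<le> (\<Sum>i<n. k i ^ 2)"
        using True by (intro member_le_sum) auto
      also have "\<dots> \<le> 2 * int c"
        using k double_theta_exp[of n k] by (simp add: level_set_def)
      finally show ?thesis .
    qed (use k in \<open>simp add: level_set_def lattice_def\<close>)
  qed
qed

definition theta_matrix :: "nat \<Rightarrow> nat \<Rightarrow> real" where
  "theta_matrix i j = (if i \<le> j then 1 else 0)"

lemma qf_theta_matrix_Suc:
  "qf (Suc n) theta_matrix x = qf n theta_matrix x + x n * (\<Sum>i<n. x i) + x n ^ 2"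
  unfolding qf_def theta_matrix_def
  by (simp add: sum.distrib sum_distrib_left algebra_simps power2_eq_square)

lemma double_qf_theta_matrix:
  "2 * qf n theta_matrix x = (\<Sum>i<n. x i ^ 2) + (\<Sum>i<n. x i) ^ 2"
  by (induction n) (simp_all add: qf_def[of 0] qf_theta_matrix_Suc algebra_simps power2_eq_square)

lemma qf_theta_matrix_of_int:
  "qf n theta_matrix (\<lambda>i. real_of_int (k i)) = real_of_int (theta_exp n k)"
proof -
  have "2 * qf n theta_matrix (\<lambda>i. real_of_int (k i)) = real_of_int (2 * theta_exp n k)"
    unfolding double_qf_theta_matrix double_theta_exp by simp
  then show ?thesis
    by simp
qed

lemma qf_theta_matrix_pos:
  assumes "p < n" "x p \<noteq> 0"
  shows "qf n theta_matrix x > 0"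
proof -
  have "0 < (\<Sum>i<n. x i ^ 2)"
    using assms by (intro sum_pos2[of _ p]) auto
  then have "0 < 2 * qf n theta_matrix x"
    unfolding double_qf_theta_matrix by (simp add: add_pos_nonneg)
  then show ?thesis
    by simp
qed

lemma int_posdef_theta_matrix: "int_posdef_qf n theta_matrix"
proof -
  have "qf n theta_matrix (\<lambda>i. real_of_int (k i)) \<in> \<int>" for k
    unfolding qf_theta_matrix_of_int by simp
  then show ?thesis
    unfolding int_posdef_qf_def by (metis qf_theta_matrix_pos)
qed

lemma qf_cong: "(\<And>p. p < n \<Longrightarrow> x p = y p) \<Longrightarrow> qf n A x = qf n A y"
  unfolding qf_def by (intro sum.cong refl) auto

definition pullback :: "nat \<Rightarrow> (nat \<Rightarrow> nat \<Rightarrow> real) \<Rightarrow> (nat \<Rightarrow> nat \<Rightarrow> real) \<Rightarrow> nat \<Rightarrow> nat \<Rightarrow> real" where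
  "pullback n A \<beta> i j = (\<Sum>p<n. \<Sum>q<n. A p q * \<beta> p i * \<beta> q j)"

lemma qf_pullback: "qf n (pullback n A \<beta>) x = qf n A (\<lambda>p. \<Sum>i<n. \<beta> p i * x i)"
proof -
  have "qf n (pullback n A \<beta>) x =
      (\<Sum>i<n. \<Sum>j<n. \<Sum>p<n. \<Sum>q<n. A p q * (\<beta> p i * x i) * (\<beta> q j * x j))"
    unfolding qf_def pullback_def by (simp add: sum_distrib_left sum_distrib_right mult_ac)
  also have "\<dots> = (\<Sum>i<n. \<Sum>p<n. \<Sum>q<n. \<Sum>j<n. A p q * (\<beta> p i * x i) * (\<beta> q j * x j))"
    by (rule sum.cong[OF refl], subst sum.swap, rule sum.cong[OF refl], subst sum.swap, rule refl)
  also have "\<dots> = (\<Sum>p<n. \<Sum>i<n. \<Sum>q<n. \<Sum>j<n. A p q * (\<beta> p i * x i) * (\<beta> q j * x j))"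
    by (rule sum.swap)
  also have "\<dots> = (\<Sum>p<n. \<Sum>q<n. \<Sum>i<n. \<Sum>j<n. A p q * (\<beta> p i * x i) * (\<beta> q j * x j))"
    by (rule sum.cong[OF refl], rule sum.swap)
  also have "\<dots> = qf n A (\<lambda>p. \<Sum>i<n. \<beta> p i * x i)"
    unfolding qf_def by (simp add: sum_distrib_left sum_distrib_right mult_ac)
  finally show ?thesis .
qed

text \<open>For \<open>d \<ge> 1\<close>, \<open>sublattice_map\<close> sends \<open>t\<close> to \<open>k\<close> with \<open>k 0 = d t 0 - (\<Sum>i\<ge>1. (i + 1) t i)\<close>
  and \<open>k i = t i\<close> for \<open>i \<ge> 1\<close>; since then \<open>weight n k = d t 0\<close>, it maps \<open>\<int>\<^sup>n\<close> onto the sublattice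
  \<open>d dvd weight n k\<close>.\<close>

definition sublattice_coeff :: "nat \<Rightarrow> nat \<Rightarrow> nat \<Rightarrow> int" where
  "sublattice_coeff d p i =
     (if p = 0 then (if i = 0 then int d else - int (i + 1)) else if p = i then 1 else 0)"

definition sublattice_map :: "nat \<Rightarrow> nat \<Rightarrow> (nat \<Rightarrow> int) \<Rightarrow> nat \<Rightarrow> int" where
  "sublattice_map n d t p = (if p < n then \<Sum>i<n. sublattice_coeff d p i * t i else 0)"

definition sublattice_form :: "nat \<Rightarrow> nat \<Rightarrow> nat \<Rightarrow> nat \<Rightarrow> real" where
  "sublattice_form n d = pullback n theta_matrix (\<lambda>p i. of_int (sublattice_coeff d p i))"

lemma sublattice_map_0:
  "sublattice_map (Suc n) d t 0 = int d * t 0 - (\<Sum>i<n. int (i + 2) * t (Suc i))"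
  unfolding sublattice_map_def sublattice_coeff_def
  by (simp add: sum.lessThan_Suc_shift del: sum.lessThan_Suc)
    (simp add: sum_negf[symmetric] algebra_simps, rule sum.cong, auto)

lemma sublattice_map_Suc: "q < n \<Longrightarrow> sublattice_map (Suc n) d t (Suc q) = t (Suc q)"
  unfolding sublattice_map_def sublattice_coeff_def
  by (simp add: sum.lessThan_Suc_shift if_distrib[of "\<lambda>a. a * _"] del: sum.lessThan_Suc cong: if_cong)

lemma sublattice_map_in_lattice: "sublattice_map n d t \<in> lattice n"
  unfolding lattice_def sublattice_map_def by auto

lemma weight_Suc: "weight (Suc n) k = k 0 + (\<Sum>i<n. int (i + 2) * k (Suc i))"
  unfolding weight_def by (simp add: sum.lessThan_Suc_shift del: sum.lessThan_Suc)

lemma weight_sublattice_map: "weight (Suc n) (sublattice_map (Suc n) d t) = int d * t 0"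
  unfolding weight_Suc sublattice_map_0 by (simp add: sublattice_map_Suc)

lemma qf_sublattice_form:
  "qf n (sublattice_form n d) (\<lambda>i. real_of_int (t i)) = real_of_int (theta_exp n (sublattice_map n d t))"
proof -
  have "qf n (sublattice_form n d) (\<lambda>i. real_of_int (t i)) =
      qf n theta_matrix (\<lambda>p. real_of_int (sublattice_map n d t p))"
    unfolding sublattice_form_def qf_pullback by (intro qf_cong) (simp add: sublattice_map_def)
  then show ?thesis
    by (simp add: qf_theta_matrix_of_int)
qed

lemma int_posdef_sublattice_form:
  assumes "d \<ge> 1"
  shows "int_posdef_qf (Suc n) (sublattice_form (Suc n) d)"
  unfolding int_posdef_qf_def
proof (intro conjI ballI allI impI)
  fix k :: "nat \<Rightarrow> int"
  show "qf (Suc n) (sublattice_form (Suc n) d) (\<lambda>i. real_of_int (k i)) \<in> \<int>"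
    unfolding qf_sublattice_form by simp
next
  fix x :: "nat \<Rightarrow> real"
  assume x: "(\<forall>i\<ge>Suc n. x i = 0) \<and> (\<exists>i<Suc n. x i \<noteq> 0)"
  define z where "z = (\<lambda>p. \<Sum>i<Suc n. real_of_int (sublattice_coeff d p i) * x i)"
  have "\<exists>p<Suc n. z p \<noteq> 0"
  proof (cases "\<exists>q<n. x (Suc q) \<noteq> 0")
    case True
    then obtain q where q: "q < n" "x (Suc q) \<noteq> 0"
      by blast
    have "z (Suc q) = x (Suc q)"
      unfolding z_def sublattice_coeff_def using q(1)
      by (simp add: sum.lessThan_Suc_shift if_distrib[of real_of_int] if_distrib[of "\<lambda>a. a * _"]
          del: sum.lessThan_Suc cong: if_cong)
    then show ?thesis
      using q by (intro exI[of _ "Suc q"]) auto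
  next
    case False
    then have "x 0 \<noteq> 0"
      using x by (metis less_Suc_eq_0_disj)
    moreover have "z 0 = real d * x 0"
      unfolding z_def sublattice_coeff_def using False
      by (simp add: sum.lessThan_Suc_shift del: sum.lessThan_Suc)
    ultimately show ?thesis
      using assms by (intro exI[of _ 0]) auto
  qed
  then show "qf (Suc n) (sublattice_form (Suc n) d) x > 0"
    unfolding sublattice_form_def qf_pullback z_def[symmetric] using qf_theta_matrix_pos by blast
qed

lemma sublattice_map_nonzero_index:
  assumes "t \<in> lattice (Suc n)" "i > 0"
  shows "sublattice_map (Suc n) d t i = t i"
proof -
  obtain q where i: "i = Suc q"
    using assms(2) gr0_conv_Suc by blast
  show ?thesis
    using assms(1) unfolding i
    by (cases "q < n") (simp_all add: sublattice_map_Suc, simp add: sublattice_map_def lattice_def)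
qed

lemma bij_betw_sublattice_map:
  assumes "d \<ge> 1"
  shows "bij_betw (sublattice_map (Suc n) d) (lattice (Suc n))
           {k \<in> lattice (Suc n). int d dvd weight (Suc n) k}"
proof (rule bij_betw_byWitness[where f' = "\<lambda>k. k(0 := weight (Suc n) k div int d)"])
  show "\<forall>t\<in>lattice (Suc n).
      (sublattice_map (Suc n) d t)(0 := weight (Suc n) (sublattice_map (Suc n) d t) div int d) = t"
    using assms by (auto simp: weight_sublattice_map fun_eq_iff sublattice_map_nonzero_index)
  show "\<forall>k\<in>{k \<in> lattice (Suc n). int d dvd weight (Suc n) k}.
      sublattice_map (Suc n) d (k(0 := weight (Suc n) k div int d)) = k"
  proof (intro ballI ext)
    fix k i assume k: "k \<in> {k \<in> lattice (Suc n). int d dvd weight (Suc n) k}"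
    then have lat: "k(0 := weight (Suc n) k div int d) \<in> lattice (Suc n)"
      by (auto simp: lattice_def)
    show "sublattice_map (Suc n) d (k(0 := weight (Suc n) k div int d)) i = k i"
    proof (cases "i = 0")
      case True
      then show ?thesis
        using k by (simp add: sublattice_map_0 weight_Suc)
    qed (simp add: sublattice_map_nonzero_index[OF lat])
  qed
  show "sublattice_map (Suc n) d ` lattice (Suc n) \<subseteq> {k \<in> lattice (Suc n). int d dvd weight (Suc n) k}"
    by (auto simp: sublattice_map_in_lattice weight_sublattice_map)
  show "(\<lambda>k. k(0 := weight (Suc n) k div int d)) ` {k \<in> lattice (Suc n). int d dvd weight (Suc n) k}
      \<subseteq> lattice (Suc n)"
    by (auto simp: lattice_def)
qed

lemma coeff_theta_Q_sublattice_form: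
  assumes "d \<ge> 1"
  shows "fps_nth (theta_Q (Suc n) (sublattice_form (Suc n) d)) c =
           of_nat (card {k \<in> level_set (Suc n) c. int d dvd weight (Suc n) k})"
proof -
  have "bij_betw (sublattice_map (Suc n) d)
      {t \<in> lattice (Suc n). qf (Suc n) (sublattice_form (Suc n) d) (\<lambda>i. real_of_int (t i)) = real c}
      {k \<in> {k \<in> lattice (Suc n). int d dvd weight (Suc n) k}. theta_exp (Suc n) k = int c}"
    by (rule bij_betw_Collect[OF bij_betw_sublattice_map[OF assms]])
      (metis qf_sublattice_form of_int_eq_iff of_int_of_nat_eq)
  moreover have "{k \<in> {k \<in> lattice (Suc n). int d dvd weight (Suc n) k}. theta_exp (Suc n) k = int c} =
      {k \<in> level_set (Suc n) c. int d dvd weight (Suc n) k}"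
    by (auto simp: level_set_def)
  ultimately show ?thesis
    unfolding theta_Q_def by (simp add: bij_betw_same_card)
qed

definition unit_root :: "nat \<Rightarrow> int \<Rightarrow> complex" where
  "unit_root m x = exp (2 * pi * \<i> / of_nat m * of_int x)"

lemma unit_root_cis: "unit_root m x = cis (2 * pi * real_of_int x / real m)"
  unfolding unit_root_def cis_conv_exp by (simp add: field_simps)

lemma unit_root_cong:
  assumes "[x = y] (mod int m)"
  shows "unit_root m x = unit_root m y"
proof -
  obtain q where q: "x = y + int m * q"
    using assms by (metis cong_iff_lin cong_sym)
  show ?thesis
  proof (cases "m = 0")
    case False
    then have "2 * pi * real_of_int x / real m = 2 * pi * real_of_int y / real m + 2 * pi * real_of_int q"
      unfolding q by (simp add: field_simps)
    then show ?thesis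
      unfolding unit_root_cis by (simp add: cis_mult[symmetric])
  qed (use q in simp)
qed

lemma unit_root_mult_divisor:
  assumes "e * d = m" "e > 0"
  shows "unit_root m (int e * x) = unit_root d x"
  unfolding unit_root_cis using assms by (auto simp: field_simps)

lemma unit_root_power: "unit_root d x ^ t = unit_root d (int t * x)"
  unfolding unit_root_cis DeMoivre by (simp add: field_simps)

lemma unit_root_eq_1_iff:
  assumes "d > 0"
  shows "unit_root d x = 1 \<longleftrightarrow> int d dvd x"
proof
  assume "unit_root d x = 1"
  then obtain z where "2 * pi * real_of_int x / real d = real_of_int z * (2 * pi)"
    unfolding unit_root_cis cis_eq_1_iff by blast
  then have "real_of_int x = real_of_int (z * int d)"
    using assms by (simp add: field_simps)
  then show "int d dvd x"
    by (metis of_int_eq_iff dvd_triv_right)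
next
  assume "int d dvd x"
  then obtain z where "x = int d * z"
    by blast
  then show "unit_root d x = 1"
    unfolding unit_root_cis using assms cis_multiple_2pi[of "real_of_int z"] by (simp add: mult.assoc)
qed

lemma sum_unit_root:
  assumes "d > 0"
  shows "(\<Sum>t<d. unit_root d (int t * x)) = (if int d dvd x then of_nat d else 0)"
proof -
  have "unit_root d x ^ d = 1"
    unfolding unit_root_power using assms by (simp add: unit_root_eq_1_iff)
  then show ?thesis
    using sum_gp_strict[of "unit_root d x" d] unit_root_eq_1_iff[OF assms, of x]
    by (simp add: unit_root_power)
qed

definition twisted_theta :: "nat \<Rightarrow> nat \<Rightarrow> complex fps" where
  "twisted_theta n j = Abs_fps (\<lambda>c. \<Sum>k\<in>level_set n c. unit_root (n + 2) (int j * weight n k))"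

lemma theta_n_eq_twisted_theta: "theta_n n = twisted_theta n 1"
  unfolding theta_n_def twisted_theta_def unit_root_def level_set_def weight_def by simp

lemma multiples_below_eq_image:
  fixes e d m :: nat
  assumes "e * d = m" "e > 0"
  shows "{j. j < m \<and> e dvd j} = (\<lambda>t. e * t) ` {..<d}"
  using assms by (auto elim!: dvdE intro!: image_eqI simp: mult_less_cancel1)

lemma sum_twisted_theta_multiples:
  assumes "e * d = Suc n + 2"
  shows "(\<Sum>j | j < Suc n + 2 \<and> e dvd j. twisted_theta (Suc n) j) =
           fps_const (of_nat d) * theta_Q (Suc n) (sublattice_form (Suc n) d)"
proof (rule fps_ext)
  fix c
  have pos: "e > 0" "d > 0"
    using assms by (auto intro!: gr0I)
  have "fps_nth (\<Sum>j | j < Suc n + 2 \<and> e dvd j. twisted_theta (Suc n) j) c =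
      (\<Sum>t<d. \<Sum>k\<in>level_set (Suc n) c. unit_root (Suc n + 2) (int (e * t) * weight (Suc n) k))"
    unfolding multiples_below_eq_image[OF assms pos(1)] using pos(1)
    by (simp add: sum.reindex inj_on_def fps_sum_nth twisted_theta_def)
  also have "\<dots> = (\<Sum>k\<in>level_set (Suc n) c. \<Sum>t<d. unit_root d (int t * weight (Suc n) k))"
  proof -
    have "unit_root (Suc n + 2) (int (e * t) * w) = unit_root d (int t * w)" for t w
      using unit_root_mult_divisor[OF assms pos(1), of "int t * w"] by (simp add: mult.assoc)
    then show ?thesis
      by (subst sum.swap) (simp only:)
  qed
  also have "\<dots> = (\<Sum>k\<in>level_set (Suc n) c. if int d dvd weight (Suc n) k then of_nat d else 0)"
    by (simp add: sum_unit_root[OF pos(2)])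
  also have "\<dots> = of_nat d * of_nat (card {k \<in> level_set (Suc n) c. int d dvd weight (Suc n) k})"
    by (simp add: sum.inter_filter[symmetric, OF finite_level_set])
  also have "\<dots> = fps_nth (fps_const (of_nat d) * theta_Q (Suc n) (sublattice_form (Suc n) d)) c"
    using pos(2) by (simp add: coeff_theta_Q_sublattice_form)
  finally show "fps_nth (\<Sum>j | j < Suc n + 2 \<and> e dvd j. twisted_theta (Suc n) j) c =
      fps_nth (fps_const (of_nat d) * theta_Q (Suc n) (sublattice_form (Suc n) d)) c" .
qed

definition rational_theta_comb :: "nat \<Rightarrow> complex fps \<Rightarrow> bool" where
  "rational_theta_comb n f \<longleftrightarrow> (\<exists>(N::nat) (a::nat \<Rightarrow> rat) (A::nat \<Rightarrow> nat \<Rightarrow> nat \<Rightarrow> real).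
     N \<ge> 1 \<and> (\<forall>i<N. int_posdef_qf n (A i)) \<and> f = (\<Sum>i<N. fps_const (of_rat (a i)) * theta_Q n (A i)))"

lemma rational_theta_comb_theta_Q:
  "int_posdef_qf n A \<Longrightarrow> rational_theta_comb n (theta_Q n A)"
  unfolding rational_theta_comb_def
  by (rule exI[of _ 1], rule exI[of _ "\<lambda>_. 1"], rule exI[of _ "\<lambda>_. A"]) simp

lemma rational_theta_comb_zero: "rational_theta_comb n 0"
  unfolding rational_theta_comb_def
  by (rule exI[of _ 1], rule exI[of _ "\<lambda>_. 0"], rule exI[of _ "\<lambda>_. theta_matrix"])
    (simp add: int_posdef_theta_matrix)

lemma sum_lessThan_add:
  fixes F :: "nat \<Rightarrow> 'a::comm_monoid_add"
  shows "(\<Sum>i<M + N. F i) = (\<Sum>i<M. F i) + (\<Sum>i<N. F (M + i))"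
  by (induction N) (simp_all add: add.assoc)

lemma rational_theta_comb_add:
  assumes "rational_theta_comb n f" "rational_theta_comb n g"
  shows "rational_theta_comb n (f + g)"
proof -
  obtain M :: nat and a A where f: "M \<ge> 1" "\<forall>i<M. int_posdef_qf n (A i)"
    "f = (\<Sum>i<M. fps_const (of_rat (a i)) * theta_Q n (A i))"
    using assms(1) unfolding rational_theta_comb_def by blast
  obtain N :: nat and b B where g: "\<forall>i<N. int_posdef_qf n (B i)"
    "g = (\<Sum>i<N. fps_const (of_rat (b i)) * theta_Q n (B i))"
    using assms(2) unfolding rational_theta_comb_def by blast
  define c where "c i = (if i < M then a i else b (i - M))" for i
  define C where "C i = (if i < M then A i else B (i - M))" for i
  have "f + g = (\<Sum>i<M + N. fps_const (of_rat (c i)) * theta_Q n (C i))"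
    unfolding sum_lessThan_add f(3) g(2) c_def C_def by simp
  moreover have "\<forall>i<M + N. int_posdef_qf n (C i)"
    using f(2) g(1) unfolding C_def by auto
  ultimately show ?thesis
    unfolding rational_theta_comb_def using f(1) by (intro exI[of _ "M + N"]) auto
qed

lemma rational_theta_comb_smult:
  assumes "rational_theta_comb n f"
  shows "rational_theta_comb n (fps_const (of_rat r) * f)"
proof -
  obtain N :: nat and a A where f: "N \<ge> 1" "\<forall>i<N. int_posdef_qf n (A i)"
    "f = (\<Sum>i<N. fps_const (of_rat (a i)) * theta_Q n (A i))"
    using assms unfolding rational_theta_comb_def by blast
  have "fps_const (of_rat r) * f = (\<Sum>i<N. fps_const (of_rat (r * a i)) * theta_Q n (A i))"
    unfolding f(3) sum_distrib_left by (simp add: of_rat_mult mult.assoc flip: fps_const_mult)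
  then show ?thesis
    unfolding rational_theta_comb_def using f(1,2) by (intro exI[of _ N] exI[of _ "\<lambda>i. r * a i"]) auto
qed

lemma rational_theta_comb_diff:
  assumes "rational_theta_comb n f" "rational_theta_comb n g"
  shows "rational_theta_comb n (f - g)"
proof -
  have "f - g = f + fps_const (of_rat (-1)) * g"
    by (simp flip: fps_const_neg)
  then show ?thesis
    using assms by (metis rational_theta_comb_add rational_theta_comb_smult)
qed

lemma rational_theta_comb_sum:
  "(\<And>x. x \<in> S \<Longrightarrow> rational_theta_comb n (f x)) \<Longrightarrow> rational_theta_comb n (sum f S)"
  by (induction S rule: infinite_finite_induct)
    (auto simp: rational_theta_comb_zero rational_theta_comb_add)

text \<open>Coordinates in the root lattice \<open>A\<^bsub>n+1\<^esub>\<close> of vectors with coordinate sum 0, indexed by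
  \<open>s \<in> {1..<n + 2}\<close>: \<open>y 1 = - (k 0 + \<dots> + k (n - 1))\<close> and \<open>y (i + 2) = k i\<close>.\<close>

definition root_indices :: "nat \<Rightarrow> nat set" where
  "root_indices n = {1..<n + 2}"

definition root_coords :: "nat \<Rightarrow> (nat \<Rightarrow> int) \<Rightarrow> nat \<Rightarrow> int" where
  "root_coords n k s = (if s = 1 then - (\<Sum>i<n. k i) else k (s - 2))"

definition of_root_coords :: "nat \<Rightarrow> (nat \<Rightarrow> int) \<Rightarrow> nat \<Rightarrow> int" where
  "of_root_coords n y i = (if i < n then y (i + 2) else 0)"

lemma sum_root_indices:
  fixes f :: "nat \<Rightarrow> 'a::comm_monoid_add"
  shows "(\<Sum>s\<in>root_indices n. f s) = f 1 + (\<Sum>i<n. f (i + 2))"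
  unfolding root_indices_def by (induction n) (simp_all add: add.assoc)

lemma of_root_coords_in_lattice: "of_root_coords n y \<in> lattice n"
  unfolding lattice_def of_root_coords_def by simp

lemma of_root_coords_root_coords: "k \<in> lattice n \<Longrightarrow> of_root_coords n (root_coords n k) = k"
  unfolding lattice_def of_root_coords_def root_coords_def by (auto simp: fun_eq_iff)

lemma of_root_coords_cong:
  "(\<And>s. s \<in> root_indices n \<Longrightarrow> y s = y' s) \<Longrightarrow> of_root_coords n y = of_root_coords n y'"
  unfolding of_root_coords_def root_indices_def by (auto simp: fun_eq_iff)

lemma sum_root_coords: "(\<Sum>s\<in>root_indices n. root_coords n k s) = 0"
  unfolding sum_root_indices root_coords_def by simp

lemma root_coords_of_root_coords:
  assumes "(\<Sum>s\<in>root_indices n. y s) = 0" "s \<in> root_indices n"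
  shows "root_coords n (of_root_coords n y) s = y s"
proof -
  have "s = 1 \<or> s - 2 < n \<and> s - 2 + 2 = s"
    using assms(2) unfolding root_indices_def by auto
  then show ?thesis
    using assms(1) unfolding sum_root_indices root_coords_def of_root_coords_def
    by (auto simp: eq_neg_iff_add_eq_0 add.commute)
qed

lemma weight_of_root_coords:
  assumes "(\<Sum>s\<in>root_indices n. y s) = 0"
  shows "weight n (of_root_coords n y) = (\<Sum>s\<in>root_indices n. int s * y s)"
proof -
  have "y 1 = - (\<Sum>i<n. y (i + 2))"
    using assms unfolding sum_root_indices by (simp add: eq_neg_iff_add_eq_0)
  then show ?thesis
    unfolding sum_root_indices weight_def of_root_coords_def
    by (simp add: sum_negf[symmetric] sum.distrib[symmetric] algebra_simps)
qed

lemma double_theta_exp_of_root_coords: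
  assumes "(\<Sum>s\<in>root_indices n. y s) = 0"
  shows "2 * theta_exp n (of_root_coords n y) = (\<Sum>s\<in>root_indices n. y s ^ 2)"
proof -
  have "y 1 = - (\<Sum>i<n. y (i + 2))"
    using assms unfolding sum_root_indices by (simp add: eq_neg_iff_add_eq_0)
  then show ?thesis
    unfolding sum_root_indices double_theta_exp of_root_coords_def by simp
qed

definition permute_lattice :: "nat \<Rightarrow> (nat \<Rightarrow> nat) \<Rightarrow> (nat \<Rightarrow> int) \<Rightarrow> nat \<Rightarrow> int" where
  "permute_lattice n \<sigma> k = of_root_coords n (root_coords n k \<circ> \<sigma>)"

lemma sum_root_coords_permute:
  assumes "bij_betw \<sigma> (root_indices n) (root_indices n)"
  shows "(\<Sum>s\<in>root_indices n. root_coords n k (\<sigma> s)) = 0"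
  using sum.reindex_bij_betw[OF assms, of "root_coords n k"] by (simp add: sum_root_coords)

lemma theta_exp_permute_lattice:
  assumes \<sigma>: "bij_betw \<sigma> (root_indices n) (root_indices n)" and k: "k \<in> lattice n"
  shows "theta_exp n (permute_lattice n \<sigma> k) = theta_exp n k"
proof -
  have "2 * theta_exp n (permute_lattice n \<sigma> k) = (\<Sum>s\<in>root_indices n. root_coords n k (\<sigma> s) ^ 2)"
    unfolding permute_lattice_def
    by (simp add: double_theta_exp_of_root_coords sum_root_coords_permute[OF \<sigma>])
  also have "\<dots> = (\<Sum>s\<in>root_indices n. root_coords n k s ^ 2)"
    by (rule sum.reindex_bij_betw[OF \<sigma>])
  also have "\<dots> = 2 * theta_exp n k"
    using double_theta_exp_of_root_coords[OF sum_root_coords, of n k]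
    by (simp add: of_root_coords_root_coords[OF k])
  finally show ?thesis
    by simp
qed

lemma weight_permute_lattice:
  assumes "bij_betw \<sigma> (root_indices n) (root_indices n)"
  shows "weight n (permute_lattice n \<sigma> k) = (\<Sum>s\<in>root_indices n. int s * root_coords n k (\<sigma> s))"
  unfolding permute_lattice_def
  by (simp add: weight_of_root_coords sum_root_coords_permute[OF assms])

lemma inj_on_permute_lattice:
  assumes \<sigma>: "bij_betw \<sigma> (root_indices n) (root_indices n)"
  shows "inj_on (permute_lattice n \<sigma>) (lattice n)"
proof (rule inj_onI)
  fix k k' assume k: "k \<in> lattice n" and k': "k' \<in> lattice n"
    and eq: "permute_lattice n \<sigma> k = permute_lattice n \<sigma> k'"
  have "root_coords n k (\<sigma> s) = root_coords n k' (\<sigma> s)" if "s \<in> root_indices n" for s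
    using arg_cong[OF eq, of "\<lambda>k. root_coords n k s"] that
    unfolding permute_lattice_def
    by (simp add: root_coords_of_root_coords sum_root_coords_permute[OF \<sigma>])
  moreover have "s \<in> \<sigma> ` root_indices n" if "s \<in> root_indices n" for s
    using that \<sigma> by (simp add: bij_betw_def)
  ultimately have "root_coords n k s = root_coords n k' s" if "s \<in> root_indices n" for s
    using that by blast
  then have "of_root_coords n (root_coords n k) = of_root_coords n (root_coords n k')"
    by (rule of_root_coords_cong)
  then show "k = k'"
    by (simp add: of_root_coords_root_coords k k')
qed

lemma permute_lattice_level_set:
  assumes \<sigma>: "bij_betw \<sigma> (root_indices n) (root_indices n)"
  shows "permute_lattice n \<sigma> ` level_set n c = level_set n c"
proof (rule endo_inj_surj[OF finite_level_set])
  show "permute_lattice n \<sigma> ` level_set n c \<subseteq> level_set n c"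
    using theta_exp_permute_lattice[OF \<sigma>]
    by (auto simp: level_set_def permute_lattice_def of_root_coords_in_lattice)
  show "inj_on (permute_lattice n \<sigma>) (level_set n c)"
    by (rule inj_on_subset[OF inj_on_permute_lattice[OF \<sigma>]]) (auto simp: level_set_def)
qed

lemma bij_betw_mult_mod:
  fixes a m :: nat
  assumes "coprime a m"
  shows "bij_betw (\<lambda>s. a * s mod m) {1..<m} {1..<m}"
proof -
  have maps: "a * s mod m \<in> {1..<m}" if "s \<in> {1..<m}" for s
  proof -
    have "\<not> m dvd s"
      using that by (auto dest: dvd_imp_le)
    then have "\<not> m dvd a * s"
      using assms by (simp add: coprime_commute coprime_dvd_mult_right_iff)
    then show ?thesis
      using that by (auto simp: dvd_eq_mod_eq_0)
  qed
  have "inj_on (\<lambda>s. a * s mod m) {1..<m}"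
  proof (rule inj_onI)
    fix s s' assume "s \<in> {1..<m}" "s' \<in> {1..<m}" "a * s mod m = a * s' mod m"
    then show "s = s'"
      using assms by (metis atLeastLessThan_iff cong_def cong_less_modulus_unique_nat
          cong_mult_lcancel_nat coprime_commute)
  qed
  then show ?thesis
    unfolding bij_betw_def using maps by (intro conjI endo_inj_surj) auto
qed

lemma twisted_theta_coprime:
  assumes "coprime a (n + 2)"
  shows "twisted_theta n a = twisted_theta n 1"
proof (rule fps_ext)
  fix c
  define \<sigma> where "\<sigma> s = a * s mod (n + 2)" for s
  have \<sigma>: "bij_betw \<sigma> (root_indices n) (root_indices n)"
    unfolding \<sigma>_def root_indices_def by (rule bij_betw_mult_mod[OF assms])
  have twist: "[int a * weight n (permute_lattice n \<sigma> k) = weight n k] (mod int (n + 2))"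
    if "k \<in> lattice n" for k
  proof -
    let ?y = "root_coords n k"
    have "int a * weight n (permute_lattice n \<sigma> k) = (\<Sum>s\<in>root_indices n. int (a * s) * ?y (\<sigma> s))"
      by (simp add: weight_permute_lattice[OF \<sigma>] sum_distrib_left mult.assoc)
    also have "[\<dots> = (\<Sum>s\<in>root_indices n. int (\<sigma> s) * ?y (\<sigma> s))] (mod int (n + 2))"
      unfolding \<sigma>_def by (intro cong_sum cong_mult cong_refl) (simp add: cong_def zmod_int)
    also have "(\<Sum>s\<in>root_indices n. int (\<sigma> s) * ?y (\<sigma> s)) = (\<Sum>s\<in>root_indices n. int s * ?y s)"
      by (rule sum.reindex_bij_betw[OF \<sigma>])
    also have "\<dots> = weight n k"
      using weight_of_root_coords[OF sum_root_coords, of n k] by (simp add: of_root_coords_root_coords that)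
    finally show ?thesis .
  qed
  have "fps_nth (twisted_theta n a) c =
      (\<Sum>k\<in>permute_lattice n \<sigma> ` level_set n c. unit_root (n + 2) (int a * weight n k))"
    by (simp add: twisted_theta_def permute_lattice_level_set[OF \<sigma>])
  also have "\<dots> = (\<Sum>k\<in>level_set n c. unit_root (n + 2) (int a * weight n (permute_lattice n \<sigma> k)))"
    by (rule sum.reindex_cong[OF inj_on_subset[OF inj_on_permute_lattice[OF \<sigma>]]])
      (auto simp: level_set_def)
  also have "\<dots> = (\<Sum>k\<in>level_set n c. unit_root (n + 2) (weight n k))"
    by (intro sum.cong refl unit_root_cong twist) (simp add: level_set_def)
  also have "\<dots> = fps_nth (twisted_theta n 1) c"
    by (simp add: twisted_theta_def)
  finally show "fps_nth (twisted_theta n a) c = fps_nth (twisted_theta n 1) c" .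
qed

lemma sum_multiples_by_gcd:
  fixes f :: "nat \<Rightarrow> 'a::comm_monoid_add"
  assumes "e dvd m" "m > 0"
  shows "(\<Sum>j | j < m \<and> e dvd j. f j) = (\<Sum>e' | e' dvd m \<and> e dvd e'. \<Sum>j | j < m \<and> gcd j m = e'. f j)"
proof -
  have "(\<Sum>j | j < m \<and> e dvd j. f j) =
      (\<Sum>e' | e' dvd m \<and> e dvd e'. sum f {j \<in> {j. j < m \<and> e dvd j}. gcd j m = e'})"
  proof (rule sum.group[symmetric])
    show "finite {e'. e' dvd m \<and> e dvd e'}"
      using assms(2) by (auto intro: finite_subset[OF _ finite_divisors_nat])
    show "(\<lambda>j. gcd j m) ` {j. j < m \<and> e dvd j} \<subseteq> {e'. e' dvd m \<and> e dvd e'}"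
      using assms(1) by auto
  qed simp
  also have "\<dots> = (\<Sum>e' | e' dvd m \<and> e dvd e'. \<Sum>j | j < m \<and> gcd j m = e'. f j)"
    by (intro sum.cong refl arg_cong[where f = "sum f"]) (auto intro: dvd_trans)
  finally show ?thesis .
qed

lemma rational_theta_comb_sum_multiples:
  assumes "e dvd Suc n + 2"
  shows "rational_theta_comb (Suc n) (\<Sum>j | j < Suc n + 2 \<and> e dvd j. twisted_theta (Suc n) j)"
proof -
  obtain d where d: "e * d = Suc n + 2"
    using assms by (metis dvdE)
  then have "d \<ge> 1"
    by (cases d) auto
  then have "rational_theta_comb (Suc n)
      (fps_const (of_rat (of_nat d)) * theta_Q (Suc n) (sublattice_form (Suc n) d))"
    by (intro rational_theta_comb_smult rational_theta_comb_theta_Q int_posdef_sublattice_form)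
  then show ?thesis
    by (subst sum_twisted_theta_multiples[OF d]) simp
qed

definition gcd_class_sum :: "nat \<Rightarrow> nat \<Rightarrow> complex fps" where
  "gcd_class_sum n e = (\<Sum>j | j < n + 2 \<and> gcd j (n + 2) = e. twisted_theta n j)"

text \<open>Downward induction on the divisor \<open>e\<close>: the multiples of \<open>e\<close> split into the gcd classes
  of the divisors \<open>e' \<ge> e\<close>, and their total is a theta series of a sublattice.\<close>

lemma rational_theta_comb_gcd_class_sum:
  "e dvd Suc n + 2 \<Longrightarrow> rational_theta_comb (Suc n) (gcd_class_sum (Suc n) e)"
proof (induction "Suc n + 2 - e" arbitrary: e rule: less_induct)
  case less
  define T where "T = {e'. e' dvd Suc n + 2 \<and> e dvd e'}"
  have "finite T"
    unfolding T_def by (auto intro: finite_subset[OF _ finite_divisors_nat])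
  moreover have "e \<in> T"
    unfolding T_def using less.prems by simp
  moreover have "(\<Sum>j | j < Suc n + 2 \<and> e dvd j. twisted_theta (Suc n) j) =
      (\<Sum>e'\<in>T. gcd_class_sum (Suc n) e')"
    unfolding gcd_class_sum_def T_def by (rule sum_multiples_by_gcd[OF less.prems]) simp
  ultimately have split: "gcd_class_sum (Suc n) e =
      (\<Sum>j | j < Suc n + 2 \<and> e dvd j. twisted_theta (Suc n) j) - (\<Sum>e'\<in>T - {e}. gcd_class_sum (Suc n) e')"
    by (simp add: sum.remove eq_diff_eq)
  have "rational_theta_comb (Suc n) (gcd_class_sum (Suc n) e')" if "e' \<in> T - {e}" for e'
  proof (rule less.hyps)
    have "e' > 0" "e' \<le> Suc n + 2" "e' \<noteq> e"
      using that unfolding T_def by (auto intro: dvd_imp_le dvd_pos_nat[of "Suc n + 2"])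
    moreover have "e \<le> e'"
      using that \<open>e' > 0\<close> unfolding T_def by (auto intro: dvd_imp_le)
    ultimately show "Suc n + 2 - e' < Suc n + 2 - e"
      by linarith
    show "e' dvd Suc n + 2"
      using that unfolding T_def by simp
  qed
  then show ?case
    unfolding split
    by (intro rational_theta_comb_diff rational_theta_comb_sum_multiples[OF less.prems]
        rational_theta_comb_sum)
qed

lemma gcd_class_sum_1:
  "gcd_class_sum n 1 = of_nat (card {j. j < n + 2 \<and> coprime j (n + 2)}) * theta_n n"
proof -
  have "gcd_class_sum n 1 = (\<Sum>j | j < n + 2 \<and> coprime j (n + 2). twisted_theta n 1)"
    unfolding gcd_class_sum_def by (intro sum.cong twisted_theta_coprime) (auto simp: coprime_iff_gcd_eq_1)
  then show ?thesis
    by (simp add: theta_n_eq_twisted_theta)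
qed

theorem proposition3p1:
  fixes n :: nat
  assumes "n \<ge> 1"
  shows "\<exists>(N::nat) (a::nat \<Rightarrow> rat) (A::nat \<Rightarrow> nat \<Rightarrow> nat \<Rightarrow> real).
           N \<ge> 1 \<and> (\<forall>i<N. int_posdef_qf n (A i)) \<and>
           theta_n n = (\<Sum>i<N. fps_const (of_rat (a i)) * theta_Q n (A i))"
proof -
  obtain m where n: "n = Suc m"
    using assms by (cases n) auto
  define C where "C = card {j. j < n + 2 \<and> coprime j (n + 2)}"
  have "C > 0"
    unfolding C_def by (rule card_gt_0_iff[THEN iffD2]) (auto intro: exI[of _ 1])
  then have "theta_n n = fps_const (of_rat (1 / of_nat C)) * gcd_class_sum n 1"
    unfolding gcd_class_sum_1 C_def[symmetric]
    by (simp add: of_rat_divide mult.assoc[symmetric] fps_const_mult flip: fps_of_nat)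
  moreover have "rational_theta_comb n (gcd_class_sum n 1)"
    unfolding n by (rule rational_theta_comb_gcd_class_sum) simp
  ultimately have "rational_theta_comb n (theta_n n)"
    by (simp add: rational_theta_comb_smult)
  then show ?thesis
    unfolding rational_theta_comb_def .
qed

end
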